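(* Let $k\ge 3$ be an integer, let $N\ge 2$, and suppose that $f:[0,N]\to\mathbb{R}$ has continuous derivatives of order up to $k$ on $(0,N)$, with real numbers $\lambda_k>0$ and $A$ such that \[0<\lambda_k\le f^{(k)}(x)\le A\lambda_k\quad (x\in(0,N)),\] and $A\lambda_k\le \tfrac14$. Let $H=[(A\lambda_k)^{-1/k}]$ and \[\mathcal{N}=\#\left\{(m,n)\in\mathbb{Z}_{>0}^2:\ m,n\le N,\ \left\|\frac{f^{(j)}(m)}{j!}-\frac{f^{(j)}(n)}{j!}\right\|\le 2H^{-j}\text{ for }1\le j\le k-1\right\}.\] Then \[\mathcal{N}\ll\big((k-1)!\,A\big)^4\left(N+\lambda_kN^2+\lambda_k^{-2/k}\right)\log N,\] with an absolute implied constant.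
   Context: $[x]$ is the integer part of $x$; $\|\theta\|=\min_{n\in\mathbb{Z}}|\theta-n|$. *)

theory Defs
  imports "HOL-Analysis.Analysis"
begin

definition dist_int :: "real \<Rightarrow> real" where
  "dist_int \<theta> = (INF n::int. \<bar>\<theta> - of_int n\<bar>)"

definition C_upto :: "nat \<Rightarrow> (real \<Rightarrow> real) \<Rightarrow> real set \<Rightarrow> bool" where
  "C_upto k f S \<longleftrightarrow>
     (\<forall>j<k. \<forall>x\<in>S. ((deriv ^^ j) f) differentiable (at x)) \<and>
     continuous_on S ((deriv ^^ k) f)"

end

theory Submission
  imports Defs
begin

(*
  Write \<phi> = f^(k-1)/(k-1)! and \<psi> = f^(k-2)/(k-2)!, so that \<psi>' = (k-1) \<phi> and \<phi>' lies between
  \<mu> = \<lambda>/(k-1)! and A \<mu>; only the conditions for j = k-1 and j = k-2 are used.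
  Fix n and group the m with ||\<phi>(m) - \<phi>(n)|| \<le> d1 by the integer r nearest to \<phi>(m) - \<phi>(n).
  Within a group, the distance d of m to the least element m0 is at most 2 d1/\<mu>, and by the
  mean value theorem \<psi>(m) - \<psi>(m0) = d (k-1) \<phi>(\<xi>) with \<phi>(\<xi>) within d1 of \<phi>(n) + r, so
  ||d (k-1) \<phi>(n)|| is small. Summing over n and exchanging the sums, for each d the n with
  ||d (k-1) \<phi>(n)|| small are counted via the monotonicity of d (k-1) \<phi>, and the sum over d
  is harmonic, which gives the factor log N. With H = floor((A \<lambda>)^(-1/k)) all tolerances are
  powers of H, and one factor (k-1)! absorbs k^2 16^k \<le> 64 e^64 (k-1)!.
*)

lemma dist_int_eq_round: "dist_int x = \<bar>x - of_int (round x)\<bar>"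
  unfolding dist_int_def
proof (rule antisym)
  show "(INF n::int. \<bar>x - of_int n\<bar>) \<le> \<bar>x - of_int (round x)\<bar>"
    by (rule cINF_lower) (auto intro: bdd_belowI[of _ 0])
  show "\<bar>x - of_int (round x)\<bar> \<le> (INF n::int. \<bar>x - of_int n\<bar>)"
    by (rule cINF_greatest) (auto simp: round_diff_minimal)
qed

lemma dist_int_le_abs_diff: "dist_int x \<le> \<bar>x - of_int z\<bar>"
  unfolding dist_int_eq_round using round_diff_minimal by blast

lemma
  fixes c L :: real
  assumes "0 \<le> L"
  shows finite_ints_near: "finite {z::int. \<bar>of_int z - c\<bar> \<le> L}"
    and card_ints_near_le: "real (card {z::int. \<bar>of_int z - c\<bar> \<le> L}) \<le> 2 * L + 1"
proof -
  have eq: "{z::int. \<bar>of_int z - c\<bar> \<le> L} = {\<lceil>c - L\<rceil>..\<lfloor>c + L\<rfloor>}"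
    by (auto simp: ceiling_le_iff le_floor_iff abs_le_iff)
  show "finite {z::int. \<bar>of_int z - c\<bar> \<le> L}"
    unfolding eq by simp
  show "real (card {z::int. \<bar>of_int z - c\<bar> \<le> L}) \<le> 2 * L + 1"
  proof (cases "\<lceil>c - L\<rceil> \<le> \<lfloor>c + L\<rfloor>")
    case True
    then have "real (card {\<lceil>c - L\<rceil>..\<lfloor>c + L\<rfloor>}) = of_int (\<lfloor>c + L\<rfloor> - \<lceil>c - L\<rceil> + 1)"
      by simp
    also have "\<dots> \<le> 2 * L + 1"
      using le_of_int_ceiling[of "c - L"] of_int_floor_le[of "c + L"] by linarith
    finally show ?thesis
      unfolding eq .
  next
    case False
    then show ?thesis
      using assms unfolding eq by simp
  qed
qed

lemma
  fixes S :: "nat set" and L :: real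
  assumes "0 \<le> L"
    and diameter: "\<And>a b. a \<in> S \<Longrightarrow> b \<in> S \<Longrightarrow> a \<le> b \<Longrightarrow> real b - real a \<le> L"
  shows finite_nat_set_bounded_diameter: "finite S"
    and card_nat_set_bounded_diameter_le: "real (card S) \<le> L + 1"
proof -
  have "finite S \<and> real (card S) \<le> L + 1"
  proof (cases "S = {}")
    case True
    then show ?thesis
      using assms by simp
  next
    case False
    define m where "m = (LEAST x. x \<in> S)"
    have "m \<in> S"
      using False unfolding m_def by (metis LeastI ex_in_conv)
    have sub: "S \<subseteq> {m..m + nat \<lfloor>L\<rfloor>}"
    proof
      fix b
      assume "b \<in> S"
      then have "m \<le> b"
        unfolding m_def by (rule Least_le)
      moreover have "real b - real m \<le> L"
        using diameter[OF \<open>m \<in> S\<close> \<open>b \<in> S\<close> \<open>m \<le> b\<close>] .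
      ultimately have "int (b - m) \<le> \<lfloor>L\<rfloor>"
        by (simp add: le_floor_iff of_nat_diff)
      then show "b \<in> {m..m + nat \<lfloor>L\<rfloor>}"
        using \<open>m \<le> b\<close> by simp
    qed
    then have "card S \<le> nat \<lfloor>L\<rfloor> + 1"
      using card_mono[OF _ sub] by simp
    then have "real (card S) \<le> real (nat \<lfloor>L\<rfloor>) + 1"
      by linarith
    also have "\<dots> \<le> L + 1"
      using assms(1) by linarith
    finally show ?thesis
      using finite_subset[OF sub] by simp
  qed
  then show "finite S" and "real (card S) \<le> L + 1"
    by simp_all
qed

lemma MVT_increment_bounds:
  fixes u u' :: "real \<Rightarrow> real"
  assumes deriv: "\<And>x. a < x \<Longrightarrow> x < b \<Longrightarrow> (u has_real_derivative u' x) (at x)"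
    and bounds: "\<And>x. a < x \<Longrightarrow> x < b \<Longrightarrow> p \<le> u' x \<and> u' x \<le> q"
    and "a < x" "x \<le> y" "y < b"
  shows "p * (y - x) \<le> u y - u x \<and> u y - u x \<le> q * (y - x)"
proof (cases "x = y")
  case False
  then have "x < y"
    using assms by simp
  moreover have "\<And>t. x \<le> t \<Longrightarrow> t \<le> y \<Longrightarrow> (u has_real_derivative u' t) (at t)"
    using deriv assms by auto
  ultimately obtain z where z: "x < z" "z < y" "u y - u x = (y - x) * u' z"
    using MVT2 by blast
  have "p \<le> u' z" "u' z \<le> q"
    using bounds[of z] z assms by auto
  then show ?thesis
    using z \<open>x < y\<close> by (simp add: mult.commute mult_left_mono)
qed simp

lemma card_subset_UN_le:
  fixes b :: real
  assumes "S \<subseteq> (\<Union>z\<in>Z. B z)" "finite Z"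
    and "\<And>z. z \<in> Z \<Longrightarrow> finite (B z)" "\<And>z. z \<in> Z \<Longrightarrow> real (card (B z)) \<le> b"
  shows "real (card S) \<le> real (card Z) * b"
proof -
  have "card S \<le> card (\<Union>z\<in>Z. B z)"
    using assms(1-3) by (intro card_mono) auto
  also have "\<dots> \<le> (\<Sum>z\<in>Z. card (B z))"
    using assms(2) by (rule card_UN_le)
  finally have "real (card S) \<le> (\<Sum>z\<in>Z. real (card (B z)))"
    by (simp only: of_nat_le_iff of_nat_sum[symmetric])
  also have "\<dots> \<le> (\<Sum>z\<in>Z. b)"
    using assms(4) by (rule sum_mono)
  finally show ?thesis
    by simp
qed

lemma
  fixes u u' :: "real \<Rightarrow> real"
  assumes "0 < p" "0 \<le> \<delta>"
    and deriv: "\<And>x. 0 < x \<Longrightarrow> x < N \<Longrightarrow> (u has_real_derivative u' x) (at x)"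
    and bounds: "\<And>x. 0 < x \<Longrightarrow> x < N \<Longrightarrow> p \<le> u' x \<and> u' x \<le> q"
  shows finite_nats_near_value: "finite {n::nat. 0 < n \<and> real n < N \<and> \<bar>u n - y\<bar> \<le> \<delta>}"
    and card_nats_near_value_le: "real (card {n::nat. 0 < n \<and> real n < N \<and> \<bar>u n - y\<bar> \<le> \<delta>}) \<le> 2 * \<delta> / p + 1"
proof -
  define S where "S = {n::nat. 0 < n \<and> real n < N \<and> \<bar>u n - y\<bar> \<le> \<delta>}"
  have diameter: "real b - real a \<le> 2 * \<delta> / p" if "a \<in> S" "b \<in> S" "a \<le> b" for a b
  proof -
    have "p * (real b - real a) \<le> u b - u a"
      using MVT_increment_bounds[where a=0 and b=N, OF deriv bounds, of a b] that unfolding S_def by auto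
    also have "\<dots> \<le> 2 * \<delta>"
      using that unfolding S_def by auto
    finally show ?thesis
      using assms(1) by (simp add: field_simps mult.commute)
  qed
  have "0 \<le> 2 * \<delta> / p"
    using assms(1,2) by simp
  show "finite {n::nat. 0 < n \<and> real n < N \<and> \<bar>u n - y\<bar> \<le> \<delta>}"
    unfolding S_def[symmetric] using \<open>0 \<le> 2 * \<delta> / p\<close> diameter by (rule finite_nat_set_bounded_diameter)
  show "real (card {n::nat. 0 < n \<and> real n < N \<and> \<bar>u n - y\<bar> \<le> \<delta>}) \<le> 2 * \<delta> / p + 1"
    unfolding S_def[symmetric] using \<open>0 \<le> 2 * \<delta> / p\<close> diameter by (rule card_nat_set_bounded_diameter_le)
qed

lemma card_small_dist_int_le:
  fixes u u' :: "real \<Rightarrow> real"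
  assumes "0 < p" "0 \<le> \<delta>" "1 < N"
    and deriv: "\<And>x. 0 < x \<Longrightarrow> x < N \<Longrightarrow> (u has_real_derivative u' x) (at x)"
    and bounds: "\<And>x. 0 < x \<Longrightarrow> x < N \<Longrightarrow> p \<le> u' x \<and> u' x \<le> q"
  shows "real (card {n::nat. 0 < n \<and> real n < N \<and> dist_int (u n) \<le> \<delta>})
           \<le> (2 * q * N + 2 * \<delta> + 1) * (2 * \<delta> / p + 1)"
proof -
  \<comment> \<open>Group the n by the integer nearest to u n; by monotonicity of u it lies in Z.\<close>
  define Z where "Z = {z::int. \<bar>of_int z - u 1\<bar> \<le> q * N + \<delta>}"
  have "p \<le> q"
    using bounds[of 1] assms(3) by simp
  then have "0 \<le> q * N + \<delta>"
    using assms by simp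
  then have Z: "finite Z" "real (card Z) \<le> 2 * (q * N + \<delta>) + 1"
    unfolding Z_def by (rule finite_ints_near, rule card_ints_near_le)
  have "{n::nat. 0 < n \<and> real n < N \<and> dist_int (u n) \<le> \<delta>}
      \<subseteq> (\<Union>z\<in>Z. {n::nat. 0 < n \<and> real n < N \<and> \<bar>u n - of_int z\<bar> \<le> \<delta>})"
  proof
    fix n
    assume n: "n \<in> {n::nat. 0 < n \<and> real n < N \<and> dist_int (u n) \<le> \<delta>}"
    then have near: "\<bar>u n - of_int (round (u n))\<bar> \<le> \<delta>"
      unfolding dist_int_eq_round by auto
    have "1 \<le> real n" "real n < N" "0 \<le> q"
      using n \<open>p \<le> q\<close> assms(1) by auto
    then have "q * (real n - 1) \<le> q * N" "0 \<le> p * (real n - 1)"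
      using assms(1) by (simp_all add: mult_left_mono)
    then have "\<bar>u n - u 1\<bar> \<le> q * N"
      using MVT_increment_bounds[where a=0 and b=N, OF deriv bounds, of 1 n] \<open>1 \<le> real n\<close> \<open>real n < N\<close>
      by auto
    then have "round (u n) \<in> Z"
      using near unfolding Z_def by auto
    then show "n \<in> (\<Union>z\<in>Z. {n::nat. 0 < n \<and> real n < N \<and> \<bar>u n - of_int z\<bar> \<le> \<delta>})"
      using n near by blast
  qed
  then have "real (card {n::nat. 0 < n \<and> real n < N \<and> dist_int (u n) \<le> \<delta>})
      \<le> real (card Z) * (2 * \<delta> / p + 1)"
    using Z(1) finite_nats_near_value[OF assms(1,2) deriv bounds]
      card_nats_near_value_le[OF assms(1,2) deriv bounds] by (rule card_subset_UN_le)
  also have "\<dots> \<le> (2 * q * N + 2 * \<delta> + 1) * (2 * \<delta> / p + 1)"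
    using Z(2) assms by (intro mult_right_mono) (auto simp: algebra_simps)
  finally show ?thesis .
qed

lemma
  fixes N :: real
  shows finite_pos_nats_le: "finite {n::nat. 0 < n \<and> real n \<le> N}"
    and card_pos_nats_le: "0 \<le> N \<Longrightarrow> real (card {n::nat. 0 < n \<and> real n \<le> N}) \<le> N"
proof -
  have sub: "{n::nat. 0 < n \<and> real n \<le> N} \<subseteq> {1..nat \<lfloor>N\<rfloor>}"
    by (auto intro: le_nat_floor)
  then show "finite {n::nat. 0 < n \<and> real n \<le> N}"
    by (rule finite_subset) simp
  assume "0 \<le> N"
  have "card {n::nat. 0 < n \<and> real n \<le> N} \<le> nat \<lfloor>N\<rfloor>"
    using card_mono[OF _ sub] by simp
  then show "real (card {n::nat. 0 < n \<and> real n \<le> N}) \<le> N"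
    using of_nat_floor[OF \<open>0 \<le> N\<close>] of_nat_mono by fastforce
qed

lemma harm_le_one_plus_ln: "1 \<le> n \<Longrightarrow> harm n \<le> 1 + ln (real n)"
  using euler_mascheroni_sequence_decreasing[of 1 n] by (simp add: harm_def)

lemma sum_count_bounds_le:
  fixes p q A N T \<delta> :: real and D :: nat
  assumes "0 < p" "q = A * p" "0 \<le> A" "0 \<le> \<delta>" "1 \<le> N" "real D \<le> N" "real D \<le> T"
  shows "(\<Sum>d=1..D. (2 * (real d * q) * N + 2 * \<delta> + 1) * (2 * \<delta> / (real d * p) + 1))
    \<le> T * (4 * A * N * \<delta> + (2 * \<delta> + 1)) + 2 * q * N * T\<^sup>2 + 2 * (2 * \<delta> + 1) * \<delta> / p * (1 + ln N)"
proof -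
  have "(\<Sum>d=1..D. (2 * (real d * q) * N + 2 * \<delta> + 1) * (2 * \<delta> / (real d * p) + 1))
      = (\<Sum>d=1..D. (4 * A * N * \<delta> + (2 * \<delta> + 1)) + 2 * q * N * real d
                     + 2 * (2 * \<delta> + 1) * \<delta> / p * inverse (real d))"
    using assms(1,2) by (intro sum.cong) (auto simp: field_simps)
  also have "\<dots> = real D * (4 * A * N * \<delta> + (2 * \<delta> + 1)) + 2 * q * N * (\<Sum>d=1..D. real d)
      + 2 * (2 * \<delta> + 1) * \<delta> / p * harm D"
    by (simp add: sum.distrib sum_distrib_left harm_def)
  also have "\<dots> \<le> T * (4 * A * N * \<delta> + (2 * \<delta> + 1)) + 2 * q * N * T\<^sup>2
      + 2 * (2 * \<delta> + 1) * \<delta> / p * (1 + ln N)"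
  proof -
    have "(\<Sum>d=1..D. real d) \<le> (real D)\<^sup>2"
      using sum_bounded_above[of "{1..D}" real "real D"] by (simp add: power2_eq_square)
    also have "\<dots> \<le> T\<^sup>2"
      using assms(7) by (intro power_mono) simp_all
    finally have "(\<Sum>d=1..D. real d) \<le> T\<^sup>2" .
    moreover have "harm D \<le> 1 + ln N"
    proof (cases "D = 0")
      case False
      then have "harm D \<le> 1 + ln (real D)"
        by (intro harm_le_one_plus_ln) simp
      also have "\<dots> \<le> 1 + ln N"
        using False assms(6) by simp
      finally show ?thesis .
    qed (use assms(5) in \<open>simp add: harm_def\<close>)
    moreover have "real D * (4 * A * N * \<delta> + (2 * \<delta> + 1)) \<le> T * (4 * A * N * \<delta> + (2 * \<delta> + 1))"
      using assms(3-5,7) by (intro mult_right_mono) simp_all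
    moreover have "0 \<le> 2 * q * N" "0 \<le> 2 * (2 * \<delta> + 1) * \<delta> / p"
      using assms(1-5) by simp_all
    ultimately show ?thesis
      by (smt (verit) mult_left_mono)
  qed
  finally show ?thesis .
qed

(* \<phi> and \<psi> stand for f^(k-1)/(k-1)! and f^(k-2)/(k-2)!, and c for k - 1. *)
locale pair_counting =
  fixes N \<mu> A d1 d2 :: real and c :: nat and \<phi> \<phi>' \<psi> :: "real \<Rightarrow> real"
  assumes N_gt_1: "1 < N" and mu_pos: "0 < \<mu>" and c_pos: "0 < c"
    and d1_nonneg: "0 \<le> d1" and d1_le_2: "d1 \<le> 2" and d2_nonneg: "0 \<le> d2"
    and phi_deriv: "\<And>x. 0 < x \<Longrightarrow> x < N \<Longrightarrow> (\<phi> has_real_derivative \<phi>' x) (at x)"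
    and phi'_bounds: "\<And>x. 0 < x \<Longrightarrow> x < N \<Longrightarrow> \<mu> \<le> \<phi>' x \<and> \<phi>' x \<le> A * \<mu>"
    and psi_deriv: "\<And>x. 0 < x \<Longrightarrow> x < N \<Longrightarrow> (\<psi> has_real_derivative c * \<phi> x) (at x)"
begin

definition shift_bound :: real where
  "shift_bound = 2 * d1 / \<mu>"

definition shift_tolerance :: real where
  "shift_tolerance = 2 * d2 + c * d1 * shift_bound"

definition close_to :: "nat \<Rightarrow> nat set" where
  "close_to n = {m. 0 < m \<and> real m < N \<and> dist_int (\<phi> m - \<phi> n) \<le> d1 \<and> dist_int (\<psi> m - \<psi> n) \<le> d2}"

definition good_shifts :: "nat \<Rightarrow> nat set" where
  "good_shifts n = {d. 1 \<le> d \<and> real d \<le> N \<and> real d \<le> shift_bound \<and>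
                       dist_int (real d * c * \<phi> n) \<le> shift_tolerance}"

definition close_pairs :: "(nat \<times> nat) set" where
  "close_pairs = {(m, n). 0 < m \<and> 0 < n \<and> real m \<le> N \<and> real n \<le> N \<and>
                    dist_int (\<phi> m - \<phi> n) \<le> d1 \<and> dist_int (\<psi> m - \<psi> n) \<le> d2}"

lemma shift_bound_nonneg: "0 \<le> shift_bound"
  unfolding shift_bound_def using d1_nonneg mu_pos by simp

lemma shift_tolerance_nonneg: "0 \<le> shift_tolerance"
  unfolding shift_tolerance_def using d1_nonneg d2_nonneg shift_bound_nonneg by simp

lemma phi_increment_bounds:
  assumes "0 < x" "x \<le> y" "y < N"
  shows "\<mu> * (y - x) \<le> \<phi> y - \<phi> x \<and> \<phi> y - \<phi> x \<le> A * \<mu> * (y - x)"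
  using MVT_increment_bounds[where a=0 and b=N, OF phi_deriv phi'_bounds assms] .

lemma one_le_A: "1 \<le> A"
proof -
  have "\<mu> \<le> A * \<mu>"
    using phi'_bounds[of 1] N_gt_1 by auto
  then show ?thesis
    using mu_pos by (simp add: mult_le_cancel_right1)
qed

lemma abs_phi_diff_le:
  assumes "0 < x" "x < N" "0 < y" "y < N"
  shows "\<bar>\<phi> y - \<phi> x\<bar> \<le> A * \<mu> * N"
proof -
  have "\<bar>\<phi> y - \<phi> x\<bar> \<le> A * \<mu> * N" if "0 < x" "x \<le> y" "y < N" for x y
  proof -
    have "0 \<le> \<mu> * (y - x)" "A * \<mu> * (y - x) \<le> A * \<mu> * N"
      using that mu_pos one_le_A by (simp_all add: mult_left_mono)
    then show ?thesis
      using phi_increment_bounds[OF that] by linarith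
  qed
  from this[of x y] this[of y x] assms show ?thesis
    by (cases "x \<le> y") (auto simp: abs_minus_commute)
qed

lemma finite_close_to: "finite (close_to n)"
  by (rule finite_subset[of _ "{..nat \<lfloor>N\<rfloor>}"]) (auto simp: close_to_def intro: le_nat_floor)

lemma finite_good_shifts: "finite (good_shifts n)"
  by (rule finite_subset[of _ "{..nat \<lfloor>N\<rfloor>}"]) (auto simp: good_shifts_def intro: le_nat_floor)

lemma psi_mean_value:
  assumes "0 < x" "x < y" "y < N"
  obtains \<xi> where "\<phi> x \<le> \<phi> \<xi>" "\<phi> \<xi> \<le> \<phi> y" "\<psi> y - \<psi> x = (y - x) * (c * \<phi> \<xi>)"
proof -
  obtain \<xi> where \<xi>: "x < \<xi>" "\<xi> < y" "\<psi> y - \<psi> x = (y - x) * (c * \<phi> \<xi>)"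
    using MVT2[of x y \<psi> "\<lambda>x. c * \<phi> x"] psi_deriv assms by auto
  moreover have "\<phi> x \<le> \<phi> \<xi>" "\<phi> \<xi> \<le> \<phi> y"
    using phi_increment_bounds[of x \<xi>] phi_increment_bounds[of \<xi> y] assms \<xi> mu_pos
    by (smt (verit) mult_pos_pos)+
  ultimately show ?thesis
    using that by blast
qed

lemma shift_in_good_shifts:
  assumes "m0 < m" and m0: "m0 \<in> close_to n" and m: "m \<in> close_to n"
    and r0: "\<bar>\<phi> m0 - \<phi> n - of_int r\<bar> \<le> d1" and r: "\<bar>\<phi> m - \<phi> n - of_int r\<bar> \<le> d1"
  shows "m - m0 \<in> good_shifts n"
proof -
  define d where "d = m - m0"
  have d: "real d = real m - real m0" "1 \<le> d"
    using assms(1) unfolding d_def by auto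
  have range: "0 < real m0" "real m0 < real m" "real m < N"
    using assms(1) m0 m unfolding close_to_def by auto
  have "\<mu> * real d \<le> \<phi> m - \<phi> m0"
    using phi_increment_bounds[of m0 m] range d(1) by simp
  also have "\<dots> \<le> 2 * d1"
    using r r0 by linarith
  finally have d_le: "real d \<le> shift_bound"
    unfolding shift_bound_def using mu_pos by (simp add: field_simps mult.commute)
  obtain \<xi> where \<xi>: "\<phi> m0 \<le> \<phi> \<xi>" "\<phi> \<xi> \<le> \<phi> m" "\<psi> m - \<psi> m0 = real d * (c * \<phi> \<xi>)"
    using psi_mean_value[OF range] d(1) by metis
  then have \<xi>_close: "\<bar>\<phi> \<xi> - \<phi> n - of_int r\<bar> \<le> d1"
    using r r0 by linarith
  define z where "z = round (\<psi> m - \<psi> n)"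
  define z0 where "z0 = round (\<psi> m0 - \<psi> n)"
  have "\<bar>\<psi> m - \<psi> n - of_int z\<bar> \<le> d2" "\<bar>\<psi> m0 - \<psi> n - of_int z0\<bar> \<le> d2"
    using m m0 unfolding close_to_def dist_int_eq_round z_def z0_def by auto
  moreover have "real d * \<bar>\<phi> \<xi> - \<phi> n - of_int r\<bar> \<le> shift_bound * d1"
    using d_le \<xi>_close d1_nonneg shift_bound_nonneg by (intro mult_mono) auto
  then have "real c * (real d * \<bar>\<phi> \<xi> - \<phi> n - of_int r\<bar>) \<le> real c * (shift_bound * d1)"
    by (rule mult_left_mono) simp
  then have "\<bar>real d * c * (\<phi> \<xi> - \<phi> n - of_int r)\<bar> \<le> c * d1 * shift_bound"
    by (simp add: abs_mult mult_ac)
  moreover have "real d * c * \<phi> n - of_int (z - z0 - int d * int c * r)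
      = (\<psi> m - \<psi> n - of_int z) - (\<psi> m0 - \<psi> n - of_int z0) - real d * c * (\<phi> \<xi> - \<phi> n - of_int r)"
    using \<xi>(3) by (simp add: algebra_simps)
  ultimately have "\<bar>real d * c * \<phi> n - of_int (z - z0 - int d * int c * r)\<bar> \<le> shift_tolerance"
    unfolding shift_tolerance_def by (smt (verit))
  then have "dist_int (real d * c * \<phi> n) \<le> shift_tolerance"
    using dist_int_le_abs_diff order_trans by blast
  moreover have "real d \<le> N"
    using d range by linarith
  ultimately show ?thesis
    using d(2) d_le unfolding good_shifts_def d_def by simp
qed

lemma card_close_to_fiber_le:
  "real (card {m \<in> close_to n. \<bar>\<phi> m - \<phi> n - of_int r\<bar> \<le> d1}) \<le> 1 + real (card (good_shifts n))"
proof -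
  define W where "W = {m \<in> close_to n. \<bar>\<phi> m - \<phi> n - of_int r\<bar> \<le> d1}"
  have "real (card W) \<le> 1 + real (card (good_shifts n))"
  proof (cases "W = {}")
    case False
    define m0 where "m0 = (LEAST m. m \<in> W)"
    have "m0 \<in> W"
      using False unfolding m0_def by (metis LeastI ex_in_conv)
    have "W \<subseteq> insert m0 ((+) m0 ` good_shifts n)"
    proof
      fix m
      assume "m \<in> W"
      have "m0 \<le> m"
        unfolding m0_def using \<open>m \<in> W\<close> by (rule Least_le)
      show "m \<in> insert m0 ((+) m0 ` good_shifts n)"
      proof (cases "m = m0")
        case False
        then have "m - m0 \<in> good_shifts n"
          using \<open>m0 \<le> m\<close> \<open>m0 \<in> W\<close> \<open>m \<in> W\<close> unfolding W_def
          by (intro shift_in_good_shifts) auto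
        then show ?thesis
          using \<open>m0 \<le> m\<close> by (auto intro: image_eqI[of _ _ "m - m0"])
      qed simp
    qed
    then have "card W \<le> card (insert m0 ((+) m0 ` good_shifts n))"
      by (intro card_mono) (simp_all add: finite_good_shifts)
    also have "\<dots> \<le> Suc (card ((+) m0 ` good_shifts n))"
      by (simp add: card_insert_if finite_good_shifts)
    also have "\<dots> \<le> Suc (card (good_shifts n))"
      using card_image_le[OF finite_good_shifts] by simp
    finally show ?thesis
      by simp
  qed simp
  then show ?thesis
    unfolding W_def .
qed

lemma card_close_to_le:
  assumes "0 < n" "real n < N"
  shows "real (card (close_to n)) \<le> (2 * A * \<mu> * N + 5) * (1 + real (card (good_shifts n)))"
proof -
  define R where "R = {r::int. \<bar>of_int r - 0\<bar> \<le> A * \<mu> * N + d1}"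
  define W where "W r = {m \<in> close_to n. \<bar>\<phi> m - \<phi> n - of_int r\<bar> \<le> d1}" for r
  have "0 \<le> A * \<mu> * N + d1"
    using one_le_A mu_pos N_gt_1 d1_nonneg by simp
  then have R: "finite R" "real (card R) \<le> 2 * (A * \<mu> * N + d1) + 1"
    unfolding R_def by (rule finite_ints_near, rule card_ints_near_le)
  have cover: "close_to n \<subseteq> (\<Union>r\<in>R. W r)"
  proof
    fix m
    assume m: "m \<in> close_to n"
    define r where "r = round (\<phi> m - \<phi> n)"
    have "\<bar>\<phi> m - \<phi> n - of_int r\<bar> \<le> d1"
      using m unfolding close_to_def r_def dist_int_eq_round by auto
    moreover have "\<bar>\<phi> m - \<phi> n\<bar> \<le> A * \<mu> * N"
      using m assms unfolding close_to_def by (intro abs_phi_diff_le) auto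
    ultimately have "r \<in> R" "m \<in> W r"
      using m unfolding R_def W_def by auto
    then show "m \<in> (\<Union>r\<in>R. W r)"
      by blast
  qed
  have "real (card (close_to n)) \<le> real (card R) * (1 + real (card (good_shifts n)))"
    using cover R(1) by (rule card_subset_UN_le) (auto simp: W_def finite_close_to card_close_to_fiber_le)
  also have "\<dots> \<le> (2 * A * \<mu> * N + 5) * (1 + real (card (good_shifts n)))"
    using R(2) d1_le_2 by (intro mult_right_mono) auto
  finally show ?thesis .
qed

lemma card_shift_hits_le:
  assumes "1 \<le> d"
  shows "real (card {n::nat. 0 < n \<and> real n < N \<and> dist_int (real d * c * \<phi> n) \<le> shift_tolerance})
    \<le> (2 * (real d * (c * (A * \<mu>))) * N + 2 * shift_tolerance + 1)
       * (2 * shift_tolerance / (real d * (c * \<mu>)) + 1)"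
proof (rule card_small_dist_int_le)
  show "0 < real d * (c * \<mu>)"
    using assms c_pos mu_pos by simp
  fix x
  assume x: "0 < x" "x < N"
  show "((\<lambda>x. real d * c * \<phi> x) has_real_derivative real d * c * \<phi>' x) (at x)"
    using phi_deriv[OF x] by (intro DERIV_cmult)
  have "real d * c * \<mu> \<le> real d * c * \<phi>' x" "real d * c * \<phi>' x \<le> real d * c * (A * \<mu>)"
    using phi'_bounds[OF x] by (simp_all add: mult_left_mono)
  then show "real d * (c * \<mu>) \<le> real d * c * \<phi>' x \<and> real d * c * \<phi>' x \<le> real d * (c * (A * \<mu>))"
    by (simp add: mult.assoc)
qed (use shift_tolerance_nonneg N_gt_1 in auto)

lemma good_shifts_eq:
  "good_shifts n = {d \<in> {1..nat \<lfloor>min N shift_bound\<rfloor>}. dist_int (real d * c * \<phi> n) \<le> shift_tolerance}"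
proof -
  have "0 \<le> min N shift_bound"
    using shift_bound_nonneg N_gt_1 by simp
  then have "real d \<le> N \<and> real d \<le> shift_bound \<longleftrightarrow> d \<le> nat \<lfloor>min N shift_bound\<rfloor>" for d
    using le_nat_floor[of d "min N shift_bound"] of_nat_floor[of "min N shift_bound"]
    by (auto simp del: of_nat_nat)
  then show ?thesis
    unfolding good_shifts_def by auto
qed

lemma sum_card_good_shifts_eq:
  "(\<Sum>n | 0 < n \<and> real n < N. card (good_shifts n))
     = (\<Sum>d=1..nat \<lfloor>min N shift_bound\<rfloor>.
          card {n. 0 < n \<and> real n < N \<and> dist_int (real d * c * \<phi> n) \<le> shift_tolerance})"
proof -
  define Ns where "Ns = {n::nat. 0 < n \<and> real n < N}"
  have "finite Ns"
    by (rule finite_subset[of _ "{..nat \<lfloor>N\<rfloor>}"]) (auto simp: Ns_def intro: le_nat_floor)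
  then show ?thesis
    unfolding good_shifts_eq card_eq_sum Ns_def[symmetric]
    using sum.swap_restrict[of Ns "{1..nat \<lfloor>min N shift_bound\<rfloor>}" "\<lambda>_ _. 1::nat"
        "\<lambda>n d. dist_int (real d * c * \<phi> n) \<le> shift_tolerance"]
    by (simp add: Ns_def conj_commute)
qed

lemma finite_close_pairs: "finite close_pairs"
  by (rule finite_subset[of _ "{..nat \<lfloor>N\<rfloor>} \<times> {..nat \<lfloor>N\<rfloor>}"])
    (auto simp: close_pairs_def intro: le_nat_floor)

lemma card_close_pairs_le_sum_close_to:
  "real (card close_pairs) \<le> 2 * N + (\<Sum>n | 0 < n \<and> real n < N. real (card (close_to n)))"
proof -
  \<comment> \<open>Pairs with a coordinate equal to N (only for integral N) are outside the open interval.\<close>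
  define Ns where "Ns = {n::nat. 0 < n \<and> real n < N}"
  define P where "P = {n::nat. 0 < n \<and> real n \<le> N}"
  define top where "top = nat \<lfloor>N\<rfloor>"
  have "finite P" "real (card P) \<le> N"
    unfolding P_def using finite_pos_nats_le card_pos_nats_le N_gt_1 by simp_all
  moreover have "finite Ns"
    using \<open>finite P\<close> by (rule finite_subset[rotated]) (auto simp: Ns_def P_def)
  moreover have "close_pairs \<subseteq> (Pair top ` P \<union> (\<lambda>m. (m, top)) ` P) \<union> prod.swap ` (SIGMA n:Ns. close_to n)"
  proof
    fix x
    assume "x \<in> close_pairs"
    then obtain m n where x: "x = (m, n)" and mn: "0 < m" "0 < n" "real m \<le> N" "real n \<le> N"
      and close: "dist_int (\<phi> m - \<phi> n) \<le> d1" "dist_int (\<psi> m - \<psi> n) \<le> d2"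
      unfolding close_pairs_def by blast
    show "x \<in> (Pair top ` P \<union> (\<lambda>m. (m, top)) ` P) \<union> prod.swap ` (SIGMA n:Ns. close_to n)"
    proof (cases "real m < N \<and> real n < N")
      case True
      then have "(n, m) \<in> (SIGMA n:Ns. close_to n)"
        using mn close unfolding Ns_def close_to_def by auto
      then show ?thesis
        unfolding x by (auto intro: rev_image_eqI)
    next
      case False
      then have "m = top \<or> n = top"
        using mn unfolding top_def by (metis floor_of_nat nat_int order_less_le)
      then show ?thesis
        using mn unfolding x P_def by auto
    qed
  qed
  ultimately have "card close_pairs \<le> card ((Pair top ` P \<union> (\<lambda>m. (m, top)) ` P) \<union> prod.swap ` (SIGMA n:Ns. close_to n))"
    by (intro card_mono) (simp_all add: finite_close_to)
  also have "\<dots> \<le> (card (Pair top ` P) + card ((\<lambda>m. (m, top)) ` P)) + card (prod.swap ` (SIGMA n:Ns. close_to n))"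
    by (intro order_trans[OF card_Un_le] add_right_mono card_Un_le)
  also have "\<dots> \<le> (card P + card P) + card (SIGMA n:Ns. close_to n)"
    by (intro add_mono card_image_le) (simp_all add: \<open>finite P\<close> \<open>finite Ns\<close> finite_close_to)
  also have "card (SIGMA n:Ns. close_to n) = (\<Sum>n\<in>Ns. card (close_to n))"
    using \<open>finite Ns\<close> by (simp add: card_SigmaI finite_close_to)
  finally have "real (card close_pairs) \<le> real (card P) + real (card P) + (\<Sum>n\<in>Ns. real (card (close_to n)))"
    unfolding of_nat_sum[symmetric] of_nat_add[symmetric] of_nat_le_iff .
  then show ?thesis
    using \<open>real (card P) \<le> N\<close> unfolding Ns_def by linarith
qed

lemma card_close_pairs_le_sum:
  "real (card close_pairs) \<le> 2 * N + (2 * A * \<mu> * N + 5) * (N + (\<Sum>d=1..nat \<lfloor>min N shift_bound\<rfloor>.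
      (2 * (real d * (c * (A * \<mu>))) * N + 2 * shift_tolerance + 1)
      * (2 * shift_tolerance / (real d * (c * \<mu>)) + 1)))"
proof -
  define Ns where "Ns = {n::nat. 0 < n \<and> real n < N}"
  have "Ns \<subseteq> {n::nat. 0 < n \<and> real n \<le> N}"
    unfolding Ns_def by auto
  then have "finite Ns" "card Ns \<le> card {n::nat. 0 < n \<and> real n \<le> N}"
    using finite_pos_nats_le by (auto intro: finite_subset card_mono)
  then have "real (card Ns) \<le> N"
    using card_pos_nats_le[of N] N_gt_1 of_nat_mono order_trans by fastforce
  have "(\<Sum>n\<in>Ns. real (card (close_to n)))
      \<le> (\<Sum>n\<in>Ns. (2 * A * \<mu> * N + 5) * (1 + real (card (good_shifts n))))"
    by (intro sum_mono card_close_to_le) (auto simp: Ns_def)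
  also have "\<dots> = (2 * A * \<mu> * N + 5) * (real (card Ns) + real (\<Sum>n\<in>Ns. card (good_shifts n)))"
    by (simp add: sum_distrib_left sum.distrib algebra_simps)
  also have "\<dots> \<le> (2 * A * \<mu> * N + 5) * (N + (\<Sum>d=1..nat \<lfloor>min N shift_bound\<rfloor>.
      (2 * (real d * (c * (A * \<mu>))) * N + 2 * shift_tolerance + 1)
      * (2 * shift_tolerance / (real d * (c * \<mu>)) + 1)))"
  proof (intro mult_left_mono add_mono)
    show "real (\<Sum>n\<in>Ns. card (good_shifts n)) \<le> (\<Sum>d=1..nat \<lfloor>min N shift_bound\<rfloor>.
      (2 * (real d * (c * (A * \<mu>))) * N + 2 * shift_tolerance + 1)
      * (2 * shift_tolerance / (real d * (c * \<mu>)) + 1))"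
      unfolding Ns_def sum_card_good_shifts_eq of_nat_sum by (intro sum_mono card_shift_hits_le) simp
    show "0 \<le> 2 * A * \<mu> * N + 5"
      using one_le_A mu_pos N_gt_1 by simp
  qed fact
  finally show ?thesis
    using card_close_pairs_le_sum_close_to unfolding Ns_def by simp
qed

lemma card_close_pairs_le:
  "real (card close_pairs) \<le> 2 * N + (2 * A * \<mu> * N + 5) *
     (N + shift_bound * (4 * A * N * shift_tolerance + (2 * shift_tolerance + 1))
        + 2 * (c * (A * \<mu>)) * N * shift_bound\<^sup>2
        + 2 * (2 * shift_tolerance + 1) * shift_tolerance / (c * \<mu>) * (1 + ln N))"
proof -
  define D where "D = nat \<lfloor>min N shift_bound\<rfloor>"
  have "0 \<le> min N shift_bound"
    using shift_bound_nonneg N_gt_1 by simp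
  then have "real D \<le> N" "real D \<le> shift_bound"
    using of_nat_floor unfolding D_def by fastforce+
  then have "(\<Sum>d=1..D. (2 * (real d * (c * (A * \<mu>))) * N + 2 * shift_tolerance + 1)
                     * (2 * shift_tolerance / (real d * (c * \<mu>)) + 1))
      \<le> shift_bound * (4 * A * N * shift_tolerance + (2 * shift_tolerance + 1))
        + 2 * (c * (A * \<mu>)) * N * shift_bound\<^sup>2
        + 2 * (2 * shift_tolerance + 1) * shift_tolerance / (c * \<mu>) * (1 + ln N)"
    using c_pos mu_pos one_le_A shift_tolerance_nonneg N_gt_1
    by (intro sum_count_bounds_le) (simp_all add: mult_ac)
  moreover have "0 \<le> 2 * A * \<mu> * N + 5"
    using one_le_A mu_pos N_gt_1 by simp
  ultimately show ?thesis
    using card_close_pairs_le_sum unfolding D_def[symmetric]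
    by (smt (verit) mult_left_mono)
qed

end

lemma pair_counting_derivatives:
  fixes f :: "real \<Rightarrow> real"
  assumes "3 \<le> k" "1 < N" and f: "C_upto k f {0<..<N}" and "0 < lam"
    and bounds: "\<forall>x\<in>{0<..<N}. lam \<le> (deriv ^^ k) f x \<and> (deriv ^^ k) f x \<le> A * lam"
    and "0 \<le> d1" "d1 \<le> 2" "0 \<le> d2"
  shows "pair_counting N (lam / fact (k - 1)) A d1 d2 (k - 1)
      (\<lambda>x. (deriv ^^ (k - 1)) f x / fact (k - 1)) (\<lambda>x. (deriv ^^ k) f x / fact (k - 1))
      (\<lambda>x. (deriv ^^ (k - 2)) f x / fact (k - 2))"
proof unfold_locales
  have deriv: "((deriv ^^ j) f has_real_derivative (deriv ^^ Suc j) f x) (at x)"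
    if "j < k" "0 < x" "x < N" for j x
    using f that unfolding C_upto_def by (auto simp: DERIV_deriv_iff_real_differentiable)
  have k: "Suc (k - 1) = k" "Suc (k - 2) = k - 1"
    using assms(1) by simp_all
  fix x
  assume x: "0 < x" "x < N"
  show "((\<lambda>x. (deriv ^^ (k - 1)) f x / fact (k - 1)) has_real_derivative (deriv ^^ k) f x / fact (k - 1)) (at x)"
    using deriv[of "k - 1" x] x k by (intro DERIV_cdivide) simp
  show "lam / fact (k - 1) \<le> (deriv ^^ k) f x / fact (k - 1)
      \<and> (deriv ^^ k) f x / fact (k - 1) \<le> A * (lam / fact (k - 1))"
    using bounds x by (auto simp: divide_right_mono)
  have "fact (k - 1) = real (k - 1) * fact (k - 2)"
    using k(2) by (metis fact_Suc of_nat_fact)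
  then have "(deriv ^^ (k - 1)) f x / fact (k - 2) = real (k - 1) * ((deriv ^^ (k - 1)) f x / fact (k - 1))"
    using assms(1) by simp
  moreover have "((\<lambda>x. (deriv ^^ (k - 2)) f x / fact (k - 2)) has_real_derivative
      (deriv ^^ (k - 1)) f x / fact (k - 2)) (at x)"
    using deriv[of "k - 2" x] x k assms(1) by (intro DERIV_cdivide) simp
  ultimately show "((\<lambda>x. (deriv ^^ (k - 2)) f x / fact (k - 2)) has_real_derivative
      real (k - 1) * ((deriv ^^ (k - 1)) f x / fact (k - 1))) (at x)"
    by simp
qed (use assms in simp_all)

lemma one_le_powr_neg_inverse:
  fixes a :: real
  assumes "0 < a" "a \<le> 1" "0 < k"
  shows "1 \<le> a powr (- 1 / real k)"
proof -
  have "a powr (1 / real k) \<le> 1" "0 < a powr (1 / real k)"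
    using assms by (simp_all add: powr_le1)
  moreover have "a powr (- 1 / real k) = inverse (a powr (1 / real k))"
    by (simp add: powr_minus[symmetric])
  ultimately show ?thesis
    by (simp add: one_le_inverse)
qed

lemma mult_powr_neg_inverse_power:
  fixes a :: real
  assumes "0 < a" "0 < k"
  shows "a * (a powr (- 1 / real k)) ^ k = 1"
proof -
  have "(a powr (- 1 / real k)) ^ k = a powr (- 1 / real k * real k)"
    using assms(1) by (simp add: powr_realpow[symmetric] powr_powr)
  also have "\<dots> = inverse a"
    using assms by (simp add: powr_minus)
  finally show ?thesis
    using assms(1) by simp
qed

lemma two_floor_powi_le:
  fixes a M :: real
  assumes "1 \<le> M" "a * M ^ k = 1" "j < k"
  shows "2 * real_of_int \<lfloor>M\<rfloor> powi (- int j) \<le> 2 ^ k * a * M ^ (k - j)"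
proof -
  have "M ^ j * M ^ (k - j) = M ^ k"
    using assms(3) by (simp add: power_add[symmetric])
  then have inv: "inverse (M ^ j) = a * M ^ (k - j)"
    using assms(2) by (metis inverse_unique mult.left_commute mult.right_neutral)
  have "1 \<le> real_of_int \<lfloor>M\<rfloor>"
    using assms(1) by simp
  then have "M / 2 \<le> real_of_int \<lfloor>M\<rfloor>"
    using floor_correct[of M] by linarith
  then have "inverse (real_of_int \<lfloor>M\<rfloor> ^ j) \<le> inverse ((M / 2) ^ j)"
    using assms(1) by (intro le_imp_inverse_le power_mono) simp_all
  also have "\<dots> = 2 ^ j * inverse (M ^ j)"
    by (simp add: power_divide field_simps)
  also have "\<dots> = 2 ^ j * (a * M ^ (k - j))"
    unfolding inv ..
  also have "\<dots> \<le> 2 ^ (k - 1) * (a * M ^ (k - j))"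
    using assms inv[symmetric] by (intro mult_right_mono power_increasing) simp_all
  finally have "2 * inverse (real_of_int \<lfloor>M\<rfloor> ^ j) \<le> 2 * 2 ^ (k - 1) * (a * M ^ (k - j))"
    by simp
  then show ?thesis
    using assms(3) by (cases k) (simp_all add: power_int_minus mult.assoc)
qed

lemma power2_powr_neg_inverse_le:
  fixes A lam :: real
  assumes "1 \<le> A" "0 < lam" "0 < k"
  shows "((A * lam) powr (- 1 / real k))\<^sup>2 \<le> lam powr (- 2 / real k)"
proof -
  have "((A * lam) powr (- 1 / real k))\<^sup>2 = (A * lam) powr (- 2 / real k)"
    using assms by (simp add: powr_realpow[symmetric] powr_powr)
  also have "\<dots> = A powr (- 2 / real k) * lam powr (- 2 / real k)"
    using assms by (simp add: powr_mult)
  also have "\<dots> \<le> lam powr (- 2 / real k)"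
  proof (rule mult_left_le_one_le)
    have "1 \<le> A powr (2 / real k)"
      using assms by (intro ge_one_powr_ge_zero) simp_all
    moreover have "A powr (- 2 / real k) = inverse (A powr (2 / real k))"
      by (simp add: powr_minus[symmetric])
    ultimately show "A powr (- 2 / real k) \<le> 1"
      by (simp add: inverse_le_1_iff)
  qed simp_all
  finally show ?thesis .
qed

lemma tolerance_bounds:
  fixes k :: nat and a M :: real and d :: "nat \<Rightarrow> real"
  assumes "3 \<le> k" "0 < a" "a \<le> 1" and M_def: "M = a powr (- 1 / real k)"
    and d_def: "\<And>j. d j = 2 * real_of_int \<lfloor>M\<rfloor> powi (- int j)"
  shows "1 \<le> M" "a * M\<^sup>2 \<le> 1" "a * M ^ 3 \<le> 1" "0 \<le> d j" "d j \<le> 2"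
    and "d (k - 1) \<le> 2 ^ k * a * M" "d (k - 2) \<le> 2 ^ k * a * M\<^sup>2"
proof -
  show "1 \<le> M"
    unfolding M_def using assms(1-3) by (intro one_le_powr_neg_inverse) simp_all
  have "a * M ^ k = 1"
    unfolding M_def using assms(1,2) by (intro mult_powr_neg_inverse_power) simp_all
  moreover have "a * M\<^sup>2 \<le> a * M ^ 3" "a * M ^ 3 \<le> a * M ^ k"
    using \<open>1 \<le> M\<close> assms(1,2) by (intro mult_left_mono power_increasing; simp)+
  ultimately show "a * M\<^sup>2 \<le> 1" "a * M ^ 3 \<le> 1"
    by simp_all
  have "1 \<le> real_of_int \<lfloor>M\<rfloor>"
    using \<open>1 \<le> M\<close> by simp
  then show "0 \<le> d j" "d j \<le> 2"
    unfolding d_def by (simp_all add: power_int_minus inverse_le_1_iff one_le_power)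
  show "d (k - 1) \<le> 2 ^ k * a * M" "d (k - 2) \<le> 2 ^ k * a * M\<^sup>2"
    using two_floor_powi_le[OF \<open>1 \<le> M\<close> \<open>a * M ^ k = 1\<close>, of "k - 1"]
      two_floor_powi_le[OF \<open>1 \<le> M\<close> \<open>a * M ^ k = 1\<close>, of "k - 2"] assms(1)
    unfolding d_def by (simp_all add: numeral_2_eq_2 Suc_diff_Suc)
qed

lemma shift_parameter_bounds:
  fixes k :: nat and A F a M d1 d2 :: real
  assumes "1 \<le> k" "1 \<le> A" "1 \<le> F" "0 < a" "1 \<le> M"
    and d1: "0 \<le> d1" "d1 \<le> 2 ^ k * a * M" and d2: "d2 \<le> 2 ^ k * a * M\<^sup>2"
    and \<mu>_def: "\<mu> = a / (A * F)" and T_def: "T = 2 * d1 / \<mu>"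
    and \<delta>_def: "\<delta> = 2 * d2 + real (k - 1) * d1 * T"
  defines "R \<equiv> real k * 4 ^ k * (A * F)"
  shows "T \<le> 2 * R * M"
    and "\<delta> \<le> 4 * R * (a * M\<^sup>2)"
    and "real (k - 1) * (\<mu> * T\<^sup>2) \<le> 4 * R * (a * M\<^sup>2)"
proof -
  define K where "K = A * F"
  define P where "P = real k * 4 ^ k"
  have R: "R = P * K"
    unfolding R_def P_def K_def ..
  have K: "1 \<le> K"
    unfolding K_def using assms(2,3) mult_mono[of 1 A 1 F] by simp
  have T_eq: "T = 2 * d1 * K / a"
    unfolding T_def \<mu>_def K_def by simp
  have "(2::real) ^ k \<le> 4 ^ k" "(4::real) ^ k \<le> real k * 4 ^ k"
    using assms(1) by (simp_all add: power_mono mult_le_cancel_right1)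
  then have two_pow_le: "2 ^ k \<le> P"
    unfolding P_def by linarith
  have k: "real (k - 1) \<le> real k"
    by simp
  have "T \<le> 2 * (2 ^ k * a * M) * K / a"
    unfolding T_eq using d1 K assms(4) by (intro divide_right_mono mult_right_mono) simp_all
  also have "\<dots> = 2 * 2 ^ k * K * M"
    using assms(4) by simp
  finally have T_le: "T \<le> 2 * 2 ^ k * K * M" .
  also have "\<dots> \<le> 2 * P * K * M"
    using two_pow_le K assms(5) by simp
  finally show "T \<le> 2 * R * M"
    unfolding R by (simp add: mult_ac)
  have "real (k - 1) * d1 * T \<le> real k * (2 ^ k * a * M) * (2 * 2 ^ k * K * M)"
    using k d1 T_le T_eq K assms(4,5)
    by (intro mult_mono) (simp_all add: zero_le_mult_iff)
  also have "\<dots> = 2 * P * K * (a * M\<^sup>2)"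
    unfolding P_def by (simp add: power2_eq_square power_mult_distrib[symmetric])
  finally have "real (k - 1) * d1 * T \<le> 2 * P * K * (a * M\<^sup>2)" .
  moreover have "2 * d2 \<le> 2 * P * K * (a * M\<^sup>2)"
  proof -
    have "2 ^ k * (a * M\<^sup>2) \<le> P * K * (a * M\<^sup>2)"
      using two_pow_le K assms(4) mult_mono[of "2 ^ k" P 1 K] by (intro mult_right_mono) (simp_all add: P_def)
    then show ?thesis
      using d2 by (simp add: mult.assoc)
  qed
  ultimately show "\<delta> \<le> 4 * R * (a * M\<^sup>2)"
    unfolding \<delta>_def R by simp
  have "real (k - 1) * (\<mu> * T\<^sup>2) = 4 * real (k - 1) * d1\<^sup>2 * K / a"
    unfolding T_eq \<mu>_def K_def[symmetric] using assms(4) K by (simp add: field_simps power2_eq_square)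
  also have "\<dots> \<le> 4 * real k * (2 ^ k * a * M)\<^sup>2 * K / a"
    using k d1 K assms(4) by (intro divide_right_mono mult_mono power_mono) simp_all
  also have "\<dots> = 4 * P * K * (a * M\<^sup>2)"
    unfolding P_def using assms(4) by (simp add: field_simps power2_eq_square power_mult_distrib[symmetric])
  finally show "real (k - 1) * (\<mu> * T\<^sup>2) \<le> 4 * R * (a * M\<^sup>2)"
    unfolding R by (simp add: mult_ac)
qed

lemma shift_terms_le:
  fixes N A K R a M c \<mu> T \<delta> :: real
  assumes "0 \<le> N" "1 \<le> A" "1 \<le> R" "1 \<le> c" "0 < a" "0 < K" "1 \<le> M"
    and aM: "a * M\<^sup>2 \<le> 1" "a * M ^ 3 \<le> 1" and \<mu>: "\<mu> = a / K"
    and T: "0 \<le> T" "T \<le> 2 * R * M" and \<delta>: "0 \<le> \<delta>" "\<delta> \<le> 4 * R * (a * M\<^sup>2)"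
    and \<mu>T: "c * (\<mu> * T\<^sup>2) \<le> 4 * R * (a * M\<^sup>2)"
  shows "T * (4 * A * N * \<delta>) + 2 * (c * (A * \<mu>)) * N * T\<^sup>2 \<le> 40 * R\<^sup>2 * A * N"
    and "T * (2 * \<delta> + 1) \<le> 18 * R\<^sup>2 * M"
    and "2 * (2 * \<delta> + 1) * \<delta> / (c * \<mu>) \<le> 72 * R\<^sup>2 * K * M\<^sup>2"
proof -
  have R_aM2: "4 * R * (a * M\<^sup>2) \<le> 4 * R"
    using mult_left_mono[OF aM(1), of "4 * R"] assms(3) by simp
  have "R * 1 \<le> R * R"
    using assms(3) by (intro mult_left_mono) simp_all
  have \<delta>_le: "2 * \<delta> + 1 \<le> 9 * R"
    using \<delta>(2) R_aM2 assms(3) by linarith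
  have "T * \<delta> \<le> (2 * R * M) * (4 * R * (a * M\<^sup>2))"
    using T(2) \<delta> order_trans[OF T] by (intro mult_mono)
  also have "\<dots> = 8 * R\<^sup>2 * (a * M ^ 3)"
    by (simp add: power2_eq_square power3_eq_cube)
  also have "\<dots> \<le> 8 * R\<^sup>2"
    using mult_left_mono[OF aM(2), of "8 * R\<^sup>2"] by simp
  finally have "(4 * A * N) * (T * \<delta>) \<le> (4 * A * N) * (8 * R\<^sup>2)"
    using assms(1,2) by (intro mult_left_mono) simp_all
  moreover have "c * (\<mu> * T\<^sup>2) \<le> 4 * R\<^sup>2"
    using \<mu>T R_aM2 \<open>R * 1 \<le> R * R\<close> unfolding power2_eq_square[of R] by linarith
  then have "(2 * A * N) * (c * (\<mu> * T\<^sup>2)) \<le> (2 * A * N) * (4 * R\<^sup>2)"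
    using assms(1,2) by (intro mult_left_mono) simp_all
  ultimately show "T * (4 * A * N * \<delta>) + 2 * (c * (A * \<mu>)) * N * T\<^sup>2 \<le> 40 * R\<^sup>2 * A * N"
    by (simp add: mult_ac)
  have "T * (2 * \<delta> + 1) \<le> (2 * R * M) * (9 * R)"
    using T(2) \<delta>_le \<delta>(1) order_trans[OF T] by (intro mult_mono) simp_all
  then show "T * (2 * \<delta> + 1) \<le> 18 * R\<^sup>2 * M"
    by (simp add: power2_eq_square mult_ac)
  have "0 < \<mu>"
    using \<mu> assms(5,6) by simp
  have "\<delta> / \<mu> \<le> 4 * R * (a * M\<^sup>2) / \<mu>"
    using \<delta>(2) \<open>0 < \<mu>\<close> by (simp add: divide_right_mono)
  also have "\<dots> = 4 * R * K * M\<^sup>2"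
    using \<mu> assms(5,6) by simp
  finally have "2 * (2 * \<delta> + 1) * (\<delta> / \<mu>) \<le> 2 * (9 * R) * (4 * R * K * M\<^sup>2)"
    using \<delta>_le \<delta>(1) \<open>0 < \<mu>\<close> assms(3) by (intro mult_mono) simp_all
  moreover have "2 * (2 * \<delta> + 1) * \<delta> / (c * \<mu>) \<le> 2 * (2 * \<delta> + 1) * \<delta> / \<mu>"
    using assms(4) \<delta>(1) \<open>0 < \<mu>\<close> by (intro divide_left_mono) (simp_all add: mult_le_cancel_right1)
  ultimately show "2 * (2 * \<delta> + 1) * \<delta> / (c * \<mu>) \<le> 72 * R\<^sup>2 * K * M\<^sup>2"
    by (simp add: power2_eq_square mult_ac)
qed

lemma prefactor_le:
  fixes N A \<mu> a M L lam :: real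
  assumes "2 \<le> N" "1 \<le> A" "0 \<le> \<mu>" "A * \<mu> \<le> a" "a = A * lam" "0 < lam"
    and "1 \<le> M" "a * M\<^sup>2 \<le> 1" "M\<^sup>2 \<le> L"
  defines "Q \<equiv> N + lam * N\<^sup>2 + L"
  shows "(2 * A * \<mu> * N + 5) * N \<le> 5 * A * Q"
    and "(2 * A * \<mu> * N + 5) * M\<^sup>2 \<le> 5 * Q"
    and "(2 * A * \<mu> * N + 5) * M \<le> 5 * Q"
proof -
  have "1 \<le> M\<^sup>2"
    using assms(7) by (simp add: one_le_power)
  have "(A * \<mu>) * N\<^sup>2 \<le> (A * lam) * N\<^sup>2"
    using assms(1,4,5) by (intro mult_right_mono) simp_all
  moreover have "N \<le> A * N" "0 \<le> A * lam * N\<^sup>2" "0 \<le> A * L"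
    using assms(1,2,6,9) \<open>1 \<le> M\<^sup>2\<close> by (simp_all add: mult_le_cancel_right1)
  ultimately show "(2 * A * \<mu> * N + 5) * N \<le> 5 * A * Q"
    unfolding Q_def by (simp add: algebra_simps power2_eq_square)
  have "(A * \<mu>) * M\<^sup>2 * N \<le> a * M\<^sup>2 * N"
    using assms(1,4) \<open>1 \<le> M\<^sup>2\<close> by (intro mult_right_mono) simp_all
  also have "\<dots> \<le> N"
    using mult_right_mono[OF assms(8), of N] assms(1) by simp
  finally have "(2 * A * \<mu> * N + 5) * M\<^sup>2 \<le> 2 * N + 5 * L"
    using assms(9) by (simp add: algebra_simps)
  also have "\<dots> \<le> 5 * Q"
    unfolding Q_def using assms(1,6) by simp
  finally show "(2 * A * \<mu> * N + 5) * M\<^sup>2 \<le> 5 * Q" .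
  moreover have "(2 * A * \<mu> * N + 5) * M \<le> (2 * A * \<mu> * N + 5) * M\<^sup>2"
    using assms(1-3,7) by (intro mult_left_mono) (simp_all add: power2_eq_square)
  ultimately show "(2 * A * \<mu> * N + 5) * M \<le> 5 * Q"
    by linarith
qed

lemma weighted_sum_le:
  fixes X N Q A K R M \<Lambda> t1 t2 t3 :: real
  assumes A: "1 \<le> A" "A \<le> K" and "1 \<le> R" "1 \<le> M" "0 \<le> X" "0 \<le> Q" "N \<le> Q" "1 \<le> \<Lambda>"
    and X: "X * N \<le> 5 * A * Q" "X * M\<^sup>2 \<le> 5 * Q" "X * M \<le> 5 * Q"
    and t: "t1 \<le> 40 * R\<^sup>2 * A * N" "t2 \<le> 18 * R\<^sup>2 * M" "t3 \<le> 72 * R\<^sup>2 * K * M\<^sup>2"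
  shows "2 * N + X * (N + t1 + t2 + t3 * \<Lambda>) \<le> 657 * R\<^sup>2 * K * A * Q * \<Lambda>"
proof -
  define W where "W = R\<^sup>2 * K * A"
  have "1 \<le> R\<^sup>2" "1 \<le> K"
    using assms(3) A by (simp_all add: one_le_power)
  then have "1 \<le> R\<^sup>2 * K" "R\<^sup>2 \<le> R\<^sup>2 * K"
    using mult_mono[of 1 "R\<^sup>2" 1 K] by (simp_all add: mult_le_cancel_left1)
  moreover have "R\<^sup>2 * K \<le> W"
    unfolding W_def using \<open>1 \<le> R\<^sup>2 * K\<close> A(1) by (simp add: mult_le_cancel_left1)
  moreover have "A \<le> W" "R\<^sup>2 * A * A \<le> W"
    unfolding W_def using A mult_right_mono[OF \<open>1 \<le> R\<^sup>2 * K\<close>, of A]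
      mult_right_mono[OF mult_left_mono[OF A(2), of "R\<^sup>2"], of A] by simp_all
  ultimately have W: "1 \<le> W" "A \<le> W" "R\<^sup>2 * A * A \<le> W" "R\<^sup>2 \<le> W" "R\<^sup>2 * K \<le> W"
    by linarith+
  have "X * t1 \<le> (40 * R\<^sup>2 * A) * (X * N)"
    using mult_left_mono[OF t(1) \<open>0 \<le> X\<close>] by (simp add: mult_ac)
  also have "\<dots> \<le> (40 * R\<^sup>2 * A) * (5 * A * Q)"
    using X(1) A by (intro mult_left_mono) simp_all
  also have "\<dots> \<le> 200 * W * Q"
    using mult_right_mono[OF W(3) \<open>0 \<le> Q\<close>] by (simp add: mult_ac)
  finally have e1: "X * t1 \<le> 200 * W * Q" .
  have "X * t2 \<le> (18 * R\<^sup>2) * (X * M)"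
    using mult_left_mono[OF t(2) \<open>0 \<le> X\<close>] by (simp add: mult_ac)
  also have "\<dots> \<le> (18 * W) * (5 * Q)"
    using W(1,4) \<open>0 \<le> X\<close> assms(4) by (intro mult_mono[OF _ X(3)]) simp_all
  finally have e2: "X * t2 \<le> 90 * W * Q"
    by simp
  have "X * t3 \<le> (72 * (R\<^sup>2 * K)) * (X * M\<^sup>2)"
    using mult_left_mono[OF t(3) \<open>0 \<le> X\<close>] by (simp add: mult_ac)
  also have "\<dots> \<le> (72 * W) * (5 * Q)"
    using W(1,5) \<open>0 \<le> X\<close> by (intro mult_mono[OF _ X(2)]) simp_all
  finally have e3: "X * t3 \<le> 360 * W * Q"
    by simp
  have e4: "2 * N + X * N \<le> 7 * W * Q"
    using X(1) \<open>N \<le> Q\<close> mult_right_mono[OF W(1) \<open>0 \<le> Q\<close>] mult_right_mono[OF W(2) \<open>0 \<le> Q\<close>]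
    unfolding mult.assoc by linarith
  have "W * Q * 1 \<le> W * Q * \<Lambda>"
    using W(1) \<open>0 \<le> Q\<close> \<open>1 \<le> \<Lambda>\<close> by (intro mult_left_mono) simp_all
  moreover have "X * t3 * \<Lambda> \<le> 360 * W * Q * \<Lambda>"
    using e3 \<open>1 \<le> \<Lambda>\<close> by (intro mult_right_mono) simp_all
  ultimately show ?thesis
    using e1 e2 e4 unfolding W_def distrib_left mult.assoc by linarith
qed

lemma close_pairs_estimate_le:
  fixes N A K R a M L c lam \<mu> T \<delta> :: real
  assumes N: "2 \<le> N" and A: "1 \<le> A" "A \<le> K" and "1 \<le> R" "1 \<le> c" "0 < a" "1 \<le> M"
    and aM: "a * M\<^sup>2 \<le> 1" "a * M ^ 3 \<le> 1" and a: "a = A * lam" and L: "M\<^sup>2 \<le> L" and \<mu>: "\<mu> = a / K"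
    and T: "0 \<le> T" "T \<le> 2 * R * M" and \<delta>: "0 \<le> \<delta>" "\<delta> \<le> 4 * R * (a * M\<^sup>2)"
    and \<mu>T: "c * (\<mu> * T\<^sup>2) \<le> 4 * R * (a * M\<^sup>2)"
  shows "2 * N + (2 * A * \<mu> * N + 5) * (N + T * (4 * A * N * \<delta> + (2 * \<delta> + 1))
            + 2 * (c * (A * \<mu>)) * N * T\<^sup>2 + 2 * (2 * \<delta> + 1) * \<delta> / (c * \<mu>) * (1 + ln N))
         \<le> 657 * R\<^sup>2 * K * A * (N + lam * N\<^sup>2 + L) * (1 + ln N)"
proof -
  have "0 < K" "0 < \<mu>" "0 < lam"
    using A \<mu> a assms(6) zero_less_mult_iff[of A lam] by auto
  have "A * \<mu> \<le> K * \<mu>"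
    using A(2) \<open>0 < \<mu>\<close> by (simp add: mult_right_mono)
  then have "A * \<mu> \<le> a"
    using \<mu> \<open>0 < K\<close> by simp
  have "0 \<le> N" "0 \<le> 2 * A * \<mu> * N + 5" "1 \<le> 1 + ln N"
    using N \<open>0 < \<mu>\<close> A by simp_all
  moreover have "0 \<le> N + lam * N\<^sup>2 + L" "N \<le> N + lam * N\<^sup>2 + L"
    using N \<open>0 < lam\<close> order_trans[OF zero_le_power2[of M] L] by simp_all
  ultimately have "2 * N + (2 * A * \<mu> * N + 5) * (N + (T * (4 * A * N * \<delta>) + 2 * (c * (A * \<mu>)) * N * T\<^sup>2)
      + T * (2 * \<delta> + 1) + 2 * (2 * \<delta> + 1) * \<delta> / (c * \<mu>) * (1 + ln N))
    \<le> 657 * R\<^sup>2 * K * A * (N + lam * N\<^sup>2 + L) * (1 + ln N)"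
    using prefactor_le[OF N A(1) less_imp_le[OF \<open>0 < \<mu>\<close>] \<open>A * \<mu> \<le> a\<close> a \<open>0 < lam\<close> assms(7) aM(1) L]
      shift_terms_le[OF \<open>0 \<le> N\<close> A(1) assms(4,5,6) \<open>0 < K\<close> assms(7) aM \<mu> T \<delta> \<mu>T]
    by (intro weighted_sum_le[OF A assms(4,7)]) simp_all
  then show ?thesis
    by (simp add: algebra_simps)
qed

lemma power_le_exp_mul_fact:
  fixes x :: real
  assumes "0 \<le> x"
  shows "x ^ n \<le> exp x * fact n"
proof -
  have "x ^ n / fact n = (\<Sum>i\<in>{n}. x ^ i / fact i)"
    by simp
  also have "\<dots> \<le> (\<Sum>i. x ^ i / fact i)"
    using assms summable_exp_generic[of x] by (intro sum_le_suminf) (auto simp: divide_inverse ac_simps)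
  also have "\<dots> = exp x"
    by (simp add: exp_def divide_inverse ac_simps)
  finally show ?thesis
    by (simp add: divide_le_eq)
qed

lemma power2_mult_four_power_le_fact:
  assumes "1 \<le> k"
  shows "(real k * 4 ^ k)\<^sup>2 \<le> 64 * exp 64 * fact (k - 1)"
proof -
  have "real k \<le> 2 ^ k"
    using less_exp[of k] by (simp add: less_imp_le)
  then have "(real k * 4 ^ k)\<^sup>2 \<le> (2 ^ k * 4 ^ k)\<^sup>2"
    by (intro power_mono mult_right_mono) simp_all
  also have "\<dots> = ((8::real) ^ k)\<^sup>2"
    by (simp add: power_mult_distrib[symmetric])
  also have "\<dots> = (8\<^sup>2) ^ k"
    by (metis power_mult mult.commute)
  also have "\<dots> = 64 * 64 ^ (k - 1)"
    using assms by (simp add: power_Suc[symmetric])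
  also have "\<dots> \<le> 64 * (exp 64 * fact (k - 1))"
    using power_le_exp_mul_fact[of 64 "k - 1"] by simp
  finally show ?thesis
    by simp
qed

lemma estimate_le_fact_power:
  fixes N A Q :: real
  assumes "1 \<le> k" "2 \<le> N" "1 \<le> A" "0 \<le> Q"
  shows "657 * (real k * 4 ^ k * (A * fact (k - 1)))\<^sup>2 * (A * fact (k - 1)) * A * Q * (1 + ln N)
    \<le> 3 * 657 * 64 * exp 64 * (fact (k - 1) * A) ^ 4 * Q * ln N"
proof -
  have "ln 2 \<le> ln N"
    using assms(2) by simp
  then have ln: "1 + ln N \<le> 3 * ln N"
    using ln2_ge_two_thirds by linarith
  have "0 \<le> (A * fact (k - 1)) ^ 3 * A * Q"
    using assms(3,4) by simp
  then have le: "(real k * 4 ^ k)\<^sup>2 * ((A * fact (k - 1)) ^ 3 * A * Q)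
      \<le> (64 * exp 64 * fact (k - 1)) * ((A * fact (k - 1)) ^ 3 * A * Q)"
    by (rule mult_right_mono[OF power2_mult_four_power_le_fact[OF assms(1)]])
  have "(real k * 4 ^ k)\<^sup>2 * ((A * fact (k - 1)) ^ 3 * A * Q) * (1 + ln N)
      \<le> (64 * exp 64 * fact (k - 1)) * ((A * fact (k - 1)) ^ 3 * A * Q) * (3 * ln N)"
    using \<open>ln 2 \<le> ln N\<close> ln2_ge_two_thirds \<open>0 \<le> (A * fact (k - 1)) ^ 3 * A * Q\<close>
    by (intro mult_mono[OF le ln]) simp_all
  then show ?thesis
    by (simp add: power_mult_distrib mult_ac power4_eq_xxxx power3_eq_cube power2_eq_square)
qed

lemma card_taylor_close_pairs_le:
  fixes f :: "real \<Rightarrow> real"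
  assumes k: "3 \<le> k" and N: "2 \<le> N" and f: "C_upto k f {0<..<N}" and lam: "0 < lam"
    and bounds: "\<forall>x\<in>{0<..<N}. lam \<le> (deriv ^^ k) f x \<and> (deriv ^^ k) f x \<le> A * lam"
    and small: "A * lam \<le> 1"
  defines "S \<equiv> {(m::nat, n::nat). 0 < m \<and> 0 < n \<and> real m \<le> N \<and> real n \<le> N \<and>
    (\<forall>j\<in>{k - 2, k - 1}. dist_int ((deriv ^^ j) f m / fact j - (deriv ^^ j) f n / fact j)
                          \<le> 2 * real_of_int \<lfloor>(A * lam) powr (- 1 / real k)\<rfloor> powi (- int j))}"
  shows "finite S"
    and "real (card S) \<le> 3 * 657 * 64 * exp 64 * (fact (k - 1) * A) ^ 4
           * (N + lam * N\<^sup>2 + lam powr (- 2 / real k)) * ln N"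
proof -
  define M where "M = (A * lam) powr (- 1 / real k)"
  define d where "d j = 2 * real_of_int \<lfloor>M\<rfloor> powi (- int j)" for j :: nat
  define F :: real where "F = fact (k - 1)"
  have "lam \<le> A * lam"
    using bounds[rule_format, of 1] N by simp
  then have A: "1 \<le> A"
    using lam by (simp add: mult_le_cancel_right1)
  then have a: "0 < A * lam"
    using lam by simp
  note tol = tolerance_bounds[OF k a small M_def d_def]
  interpret pair_counting N "lam / F" A "d (k - 1)" "d (k - 2)" "k - 1"
      "\<lambda>x. (deriv ^^ (k - 1)) f x / F" "\<lambda>x. (deriv ^^ k) f x / F" "\<lambda>x. (deriv ^^ (k - 2)) f x / fact (k - 2)"
    unfolding F_def using k N f lam bounds tol(4,5) by (intro pair_counting_derivatives) simp_all
  have S: "S = close_pairs"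
    unfolding S_def close_pairs_def unfolding F_def d_def M_def by auto
  then show "finite S"
    using finite_close_pairs by simp
  have "1 \<le> k" "1 \<le> F" "1 \<le> real (k - 1)" "A \<le> A * F" "1 \<le> real k * 4 ^ k"
    using k A one_le_power[of "4::real" k] mult_mono[of 1 "real k" 1 "4 ^ k"]
    unfolding F_def by (simp_all add: mult_le_cancel_left1)
  moreover have "1 \<le> A * F"
    using A \<open>A \<le> A * F\<close> by linarith
  ultimately have "1 \<le> real k * 4 ^ k * (A * F)"
    using mult_mono[of 1 "real k * 4 ^ k" 1 "A * F"] by simp
  moreover have "M\<^sup>2 \<le> lam powr (- 2 / real k)"
    unfolding M_def using A lam k by (intro power2_powr_neg_inverse_le) simp_all
  moreover have \<mu>: "lam / F = A * lam / (A * F)"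
    using A by simp
  ultimately have "real (card S) \<le> 657 * (real k * 4 ^ k * (A * F))\<^sup>2 * (A * F) * A
      * (N + lam * N\<^sup>2 + lam powr (- 2 / real k)) * (1 + ln N)"
    unfolding S
    using card_close_pairs_le close_pairs_estimate_le[OF N A \<open>A \<le> A * F\<close> _ \<open>1 \<le> real (k - 1)\<close>
        a tol(1-3) refl \<open>M\<^sup>2 \<le> lam powr (- 2 / real k)\<close> \<mu> shift_bound_nonneg _ shift_tolerance_nonneg]
      shift_parameter_bounds[OF \<open>1 \<le> k\<close> A \<open>1 \<le> F\<close> a tol(1,4,6,7) \<mu> shift_bound_def shift_tolerance_def]
    by (meson order_trans)
  also have "\<dots> \<le> 3 * 657 * 64 * exp 64 * (fact (k - 1) * A) ^ 4
           * (N + lam * N\<^sup>2 + lam powr (- 2 / real k)) * ln N"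
    unfolding F_def using k N A lam by (intro estimate_le_fact_power) simp_all
  finally show "real (card S) \<le> 3 * 657 * 64 * exp 64 * (fact (k - 1) * A) ^ 4
           * (N + lam * N\<^sup>2 + lam powr (- 2 / real k)) * ln N" .
qed

theorem lemma3:
  shows "\<exists>C>0. \<forall>(k::nat) (N::real) (f::real \<Rightarrow> real) (lam::real) (A::real).
     k \<ge> 3 \<longrightarrow> N \<ge> 2 \<longrightarrow> C_upto k f {0<..<N} \<longrightarrow>
     0 < lam \<longrightarrow>
     (\<forall>x\<in>{0<..<N}. lam \<le> (deriv ^^ k) f x \<and> (deriv ^^ k) f x \<le> A * lam) \<longrightarrow>
     A * lam \<le> 1/4 \<longrightarrow>
     (let H = \<lfloor>(A * lam) powr (- 1 / real k)\<rfloor> in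
      real (card {(m::nat, n::nat). 0 < m \<and> 0 < n \<and> real m \<le> N \<and> real n \<le> N \<and>
         (\<forall>j\<in>{1..k-1}. dist_int ((deriv ^^ j) f (real m) / fact j - (deriv ^^ j) f (real n) / fact j)
                           \<le> 2 * real_of_int H powi (- int j))})
      \<le> C * (fact (k - 1) * A) ^ 4 * (N + lam * N\<^sup>2 + lam powr (- 2 / real k)) * ln N)"
proof (intro exI[of _ "3 * 657 * 64 * exp 64"] conjI allI impI)
  show "(0::real) < 3 * 657 * 64 * exp 64"
    by simp
  fix k :: nat and N :: real and f :: "real \<Rightarrow> real" and lam A :: real
  assume k: "3 \<le> k" and N: "2 \<le> N" and f: "C_upto k f {0<..<N}" and lam: "0 < lam"
    and bounds: "\<forall>x\<in>{0<..<N}. lam \<le> (deriv ^^ k) f x \<and> (deriv ^^ k) f x \<le> A * lam"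
    and small: "A * lam \<le> 1 / 4"
  note taylor = card_taylor_close_pairs_le[OF k N f lam bounds]
  have "{k - 2, k - 1} \<subseteq> {1..k - 1}"
    using k by auto
  then have "real (card {(m::nat, n::nat). 0 < m \<and> 0 < n \<and> real m \<le> N \<and> real n \<le> N \<and>
      (\<forall>j\<in>{1..k-1}. dist_int ((deriv ^^ j) f (real m) / fact j - (deriv ^^ j) f (real n) / fact j)
                     \<le> 2 * real_of_int \<lfloor>(A * lam) powr (- 1 / real k)\<rfloor> powi (- int j))})
    \<le> real (card {(m::nat, n::nat). 0 < m \<and> 0 < n \<and> real m \<le> N \<and> real n \<le> N \<and>
      (\<forall>j\<in>{k - 2, k - 1}. dist_int ((deriv ^^ j) f m / fact j - (deriv ^^ j) f n / fact j)
                     \<le> 2 * real_of_int \<lfloor>(A * lam) powr (- 1 / real k)\<rfloor> powi (- int j))})"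
    using taylor(1) small by (intro of_nat_mono card_mono) auto
  also have "\<dots> \<le> 3 * 657 * 64 * exp 64 * (fact (k - 1) * A) ^ 4
      * (N + lam * N\<^sup>2 + lam powr (- 2 / real k)) * ln N"
    using taylor(2) small by simp
  finally show "let H = \<lfloor>(A * lam) powr (- 1 / real k)\<rfloor> in
      real (card {(m::nat, n::nat). 0 < m \<and> 0 < n \<and> real m \<le> N \<and> real n \<le> N \<and>
         (\<forall>j\<in>{1..k-1}. dist_int ((deriv ^^ j) f (real m) / fact j - (deriv ^^ j) f (real n) / fact j)
                           \<le> 2 * real_of_int H powi (- int j))})
      \<le> 3 * 657 * 64 * exp 64 * (fact (k - 1) * A) ^ 4 * (N + lam * N\<^sup>2 + lam powr (- 2 / real k)) * ln N"
    unfolding Let_def .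
qed

end
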